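(* Let $K=K(p,q)$ be a 2-bridge knot with $e_i,\sigma,C,D,W,W_*$ as in the context, let $n\in\mathbb{Z}$ and $N=n-2\sigma$. If $t\in\mathbb{C}\setminus\{0\}$ and $u=(t-t^{-1})^2$, then the equations $C^NW_*W=\mathrm{Id}$ and $WC=DW$ do not both hold.
   Context: $K(p,q)$ denotes the 2-bridge knot with $p,q$ odd integers, $q\in(-p,p)$. For $1\le i\le p-1$ let $e_i=(-1)^{\lfloor iq/p\rfloor}$ and $\sigma=\sum_{i=1}^{p-1}e_i$. For $t\in\mathbb{C}\setminus\{0\}$, $u\in\mathbb{C}$ let $C=\begin{pmatrix}t&1\\0&t^{-1}\end{pmatrix}$, $D=\begin{pmatrix}t&0\\-u&t^{-1}\end{pmatrix}$, $W=C^{e_1}D^{e_2}\cdots C^{e_{p-2}}D^{e_{p-1}}$ and $W_*=D^{e_1}C^{e_2}\cdots D^{e_{p-2}}C^{e_{p-1}}$. *)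

theory Defs
  imports "HOL-Analysis.Analysis"
begin

type_synonym cmat2 = "complex^2^2"

definition mat_zpow :: "cmat2 \<Rightarrow> int \<Rightarrow> cmat2" where
  "mat_zpow A N = (if 0 \<le> N then ((\<lambda>X. A ** X) ^^ nat N) (mat 1)
                   else ((\<lambda>X. matrix_inv A ** X) ^^ nat (- N)) (mat 1))"

definition Cmat :: "complex \<Rightarrow> cmat2" where
  "Cmat t = vector [vector [t, 1], vector [0, inverse t]]"

definition Dmat :: "complex \<Rightarrow> complex \<Rightarrow> cmat2" where
  "Dmat t u = vector [vector [t, 0], vector [- u, inverse t]]"

text \<open>e_i = (-1)^floor(i q / p); for p > 0 integer division is the floor.\<close>
definition eps :: "int \<Rightarrow> int \<Rightarrow> nat \<Rightarrow> int" where
  "eps p q i = (if even ((int i * q) div p) then 1 else -1)"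

definition sigma :: "int \<Rightarrow> int \<Rightarrow> int" where
  "sigma p q = (\<Sum>i\<in>{1..nat p - 1}. eps p q i)"

definition mat_prod_list :: "cmat2 list \<Rightarrow> cmat2" where
  "mat_prod_list Ms = foldr (\<lambda>A B. A ** B) Ms (mat 1)"

definition Wmat :: "int \<Rightarrow> int \<Rightarrow> complex \<Rightarrow> complex \<Rightarrow> cmat2" where
  "Wmat p q t u = mat_prod_list
     (map (\<lambda>i. mat_zpow (if odd i then Cmat t else Dmat t u) (eps p q i)) [1..<nat p])"

definition Wstar :: "int \<Rightarrow> int \<Rightarrow> complex \<Rightarrow> complex \<Rightarrow> cmat2" where
  "Wstar p q t u = mat_prod_list
     (map (\<lambda>i. mat_zpow (if odd i then Dmat t u else Cmat t) (eps p q i)) [1..<nat p])"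

end

theory Submission
  imports Defs
begin

text \<open>For \<open>u = (t - t\<^sup>-\<^sup>1)\<^sup>2\<close> the vector \<open>v = (1, t\<^sup>-\<^sup>1 - t)\<close> is a common eigenvector of \<open>C\<close>
  and \<open>D\<close>, with eigenvalues \<open>t\<^sup>-\<^sup>1\<close> and \<open>t\<close>. Hence it is an eigenvector of every word in
  \<open>C\<^sup>\<plusminus>\<^sup>1\<close>, \<open>D\<^sup>\<plusminus>\<^sup>1\<close>, in particular \<open>W v = d v\<close> with \<open>d \<noteq> 0\<close>. On the other hand the
  \<open>(1,2)\<close> entry of \<open>W C = D W\<close> says precisely that the first coordinate of \<open>W v\<close>,
  which is \<open>d\<close>, vanishes.\<close>

lemma matrix_inv_left:
  fixes A :: "'a::semiring_1^'n^'m"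
  assumes "invertible A"
  shows "matrix_inv A ** A = mat 1"
  using assms unfolding invertible_def matrix_inv_def
  by (rule someI2_ex) auto

lemma matrix_inv_eigenvector:
  fixes A :: "'a::field^'n^'n"
  assumes "invertible A" and "A *v v = c *s v"
  shows "matrix_inv A *v v = inverse c *s v"
proof -
  have v: "v = c *s (matrix_inv A *v v)"
    by (metis assms matrix_inv_left matrix_vector_mul_assoc matrix_vector_mul_lid
        vector_scalar_commute)
  show ?thesis
  proof (cases "c = 0")
    case True
    with v show ?thesis by simp
  next
    case False
    then show ?thesis
      by (subst (2) v) (simp add: vector_smult_assoc)
  qed
qed

lemma funpow_left_mult_eigenvector:
  fixes A :: "'a::field^'n^'n"
  assumes "A *v v = c *s v"
  shows "((\<lambda>X. A ** X) ^^ k) (mat 1) *v v = c ^ k *s v"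
proof (induction k)
  case 0
  then show ?case by simp
next
  case (Suc k)
  then show ?case
    using assms
    by (simp add: matrix_vector_mul_assoc[symmetric] vector_scalar_commute vector_smult_assoc
        mult.commute)
qed

lemma mat_zpow_eigenvector:
  assumes "invertible M" and "M *v v = c *s v"
  shows "mat_zpow M k *v v = c powi k *s v"
  using funpow_left_mult_eigenvector[OF assms(2)]
    funpow_left_mult_eigenvector[OF matrix_inv_eigenvector[OF assms]]
  by (simp add: mat_zpow_def power_int_def)

lemma mat_prod_list_eigenvector:
  assumes "\<forall>x\<in>set xs. F x *v v = c x *s v"
  shows "mat_prod_list (map F xs) *v v = (\<Prod>x\<leftarrow>xs. c x) *s v"
  using assms
  by (induction xs)
    (simp_all add: mat_prod_list_def matrix_vector_mul_assoc[symmetric] vector_scalar_commute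
      vector_smult_assoc mult.commute)

definition CD_eigenvector :: "complex \<Rightarrow> complex^2" where
  "CD_eigenvector t = vector [1, inverse t - t]"

lemma invertible_Cmat: "t \<noteq> 0 \<Longrightarrow> invertible (Cmat t)"
  by (simp add: invertible_det_nz det_2 Cmat_def)

lemma invertible_Dmat: "t \<noteq> 0 \<Longrightarrow> invertible (Dmat t u)"
  by (simp add: invertible_det_nz det_2 Dmat_def)

lemma Cmat_eigenvector: "Cmat t *v CD_eigenvector t = inverse t *s CD_eigenvector t"
  by (simp add: CD_eigenvector_def Cmat_def vec_eq_iff forall_2 matrix_vector_mult_def sum_2)

lemma Dmat_eigenvector:
  assumes "t \<noteq> 0"
  shows "Dmat t ((t - inverse t)\<^sup>2) *v CD_eigenvector t = t *s CD_eigenvector t"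
  using assms
  by (simp add: CD_eigenvector_def Dmat_def vec_eq_iff forall_2 matrix_vector_mult_def sum_2
      field_simps power2_eq_square)

lemma Wmat_eigenvector:
  assumes "t \<noteq> 0"
  shows "\<exists>d. d \<noteq> 0 \<and>
    Wmat p q t ((t - inverse t)\<^sup>2) *v CD_eigenvector t = d *s CD_eigenvector t"
proof -
  let ?c = "\<lambda>i. (if odd i then inverse t else t) powi eps p q i"
  have "Wmat p q t ((t - inverse t)\<^sup>2) *v CD_eigenvector t
      = (\<Prod>i\<leftarrow>[1..<nat p]. ?c i) *s CD_eigenvector t"
    unfolding Wmat_def
    using assms invertible_Cmat invertible_Dmat Cmat_eigenvector Dmat_eigenvector
    by (intro mat_prod_list_eigenvector) (simp add: mat_zpow_eigenvector)
  moreover have "(\<Prod>i\<leftarrow>[1..<nat p]. ?c i) \<noteq> 0"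
    using assms by (auto simp: prod_list_zero_iff split: if_splits)
  ultimately show ?thesis by blast
qed

lemma intertwiner_CD_eigenvector_first_coordinate:
  assumes "W ** Cmat t = Dmat t u ** W"
  shows "(W *v CD_eigenvector t) $ 1 = 0"
proof -
  have "(W ** Cmat t) $ 1 $ 2 = (Dmat t u ** W) $ 1 $ 2"
    using assms by simp
  then have "W$1$1 + W$1$2 * inverse t = t * W$1$2"
    by (simp add: matrix_matrix_mult_def sum_2 Cmat_def Dmat_def)
  then show ?thesis
    by (simp add: CD_eigenvector_def matrix_vector_mult_def sum_2 algebra_simps)
qed

theorem mainTheorem6:
  fixes p q n :: int and t u :: complex
  assumes "odd p" and "odd q" and "- p < q" and "q < p" and "coprime p q"
    and "t \<noteq> 0" and "u = (t - inverse t)\<^sup>2"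
  shows "\<not> (mat_zpow (Cmat t) (n - 2 * sigma p q) ** Wstar p q t u ** Wmat p q t u = mat 1
            \<and> Wmat p q t u ** Cmat t = Dmat t u ** Wmat p q t u)"
proof
  assume "mat_zpow (Cmat t) (n - 2 * sigma p q) ** Wstar p q t u ** Wmat p q t u = mat 1
            \<and> Wmat p q t u ** Cmat t = Dmat t u ** Wmat p q t u"
  then have "(Wmat p q t u *v CD_eigenvector t) $ 1 = 0"
    by (blast intro: intertwiner_CD_eigenvector_first_coordinate)
  moreover obtain d where "d \<noteq> 0" "Wmat p q t u *v CD_eigenvector t = d *s CD_eigenvector t"
    using Wmat_eigenvector[OF \<open>t \<noteq> 0\<close>] \<open>u = (t - inverse t)\<^sup>2\<close> by blast
  ultimately show False
    by (simp add: CD_eigenvector_def)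
qed

end
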